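(* Let $i,j,m$ be non-negative integers. Then \[2^{2m}\,C(i,j)=\sum_{b=0}^m\binom{m}{b}\,C(i+b,\,m+j-b).\]
   Context: $C(p,q)=\frac{(2p)!(2q)!}{p!(p+q)!q!}$ for non-negative integers $p,q$. *)

theory Defs
  imports Complex_Main
begin

definition superC :: "nat \<Rightarrow> nat \<Rightarrow> rat" where
  "superC p q = (fact (2*p) * fact (2*q)) / (fact p * fact (p+q) * fact q)"

end

theory Submission
  imports Defs
begin

text \<open>The super Catalan numbers satisfy the Pascal-type recurrence
  \<open>C(p+1,q) + C(p,q+1) = 4 C(p,q)\<close>. Unfolding it \<open>m\<close> times, exactly as Pascal's rule
  unfolds \<open>(x + y)^m\<close>, expresses \<open>4^m C(i,j)\<close> as the binomially weighted sum of the values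
  \<open>C(i+b, j+m-b)\<close>.\<close>

lemma sum_choose_Suc_mult:
  fixes g :: "nat \<Rightarrow> 'a::comm_semiring_1"
  shows "(\<Sum>b\<le>Suc m. of_nat (Suc m choose b) * g b)
       = (\<Sum>b\<le>m. of_nat (m choose b) * (g b + g (Suc b)))"
proof -
  have shift: "(\<Sum>b\<le>m. of_nat (m choose b) * g b)
             = g 0 + (\<Sum>b<m. of_nat (m choose Suc b) * g (Suc b))"
    by (simp only: sum.lessThan_Suc_shift flip: lessThan_Suc_atMost) simp
  have "(\<Sum>b\<le>Suc m. of_nat (Suc m choose b) * g b)
      = g 0 + (\<Sum>b\<le>m. of_nat (Suc m choose Suc b) * g (Suc b))"
    by (subst sum.atMost_Suc_shift) simp
  also have "\<dots> = g 0 + (\<Sum>b\<le>m. of_nat (m choose b) * g (Suc b))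
                     + (\<Sum>b<m. of_nat (m choose Suc b) * g (Suc b))"
    by (simp add: sum.distrib algebra_simps binomial_eq_0 flip: lessThan_Suc_atMost)
  finally show ?thesis
    unfolding distrib_left sum.distrib shift by (simp add: add_ac)
qed

lemma power_mult_eq_binomial_sum_if_pascal_recurrence:
  fixes f :: "nat \<Rightarrow> nat \<Rightarrow> 'a::comm_semiring_1"
  assumes rec: "\<And>p q. f (Suc p) q + f p (Suc q) = c * f p q"
  shows "c ^ m * f i j = (\<Sum>b\<le>m. of_nat (m choose b) * f (i + b) (m + j - b))"
proof (induction m arbitrary: i j)
  case 0
  show ?case by simp
next
  case (Suc m)
  have "c ^ Suc m * f i j = c ^ m * (f (Suc i) j + f i (Suc j))"
    by (simp add: rec mult_ac)
  also have "\<dots> = c ^ m * f (Suc i) j + c ^ m * f i (Suc j)"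
    by (rule distrib_left)
  also have "\<dots> = (\<Sum>b\<le>m. of_nat (m choose b) * f (Suc i + b) (m + j - b))
                 + (\<Sum>b\<le>m. of_nat (m choose b) * f (i + b) (m + Suc j - b))"
    by (simp only: Suc.IH)
  also have "\<dots> = (\<Sum>b\<le>m. of_nat (m choose b)
                      * (f (i + b) (Suc m + j - b) + f (i + Suc b) (Suc m + j - Suc b)))"
    by (auto simp: algebra_simps Suc_diff_le sum.distrib[symmetric] intro: sum.cong)
  also have "\<dots> = (\<Sum>b\<le>Suc m. of_nat (Suc m choose b) * f (i + b) (Suc m + j - b))"
    by (rule sum_choose_Suc_mult[symmetric])
  finally show ?case .
qed

lemma superC_commute: "superC p q = superC q p"
  unfolding superC_def by (simp add: add.commute mult.commute)

lemma superC_Suc_left: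
  "superC (Suc p) q = superC p q * (2 * (2 * of_nat p + 1) / (of_nat p + of_nat q + 1))"
proof -
  define A :: rat where "A = fact (2 * p) * fact (2 * q)"
  define B :: rat where "B = fact p * fact (p + q) * fact q"
  have fact_double: "fact (2 * Suc p) = (of_nat p + 1) * (2 * (2 * of_nat p + 1)) * (fact (2 * p) :: rat)"
    by (simp add: fact_Suc algebra_simps)
  have fact_sum: "fact (Suc p + q) = (of_nat p + of_nat q + 1) * (fact (p + q) :: rat)"
    by (simp add: fact_Suc del: of_nat_Suc)
  have fact_p: "fact (Suc p) = (of_nat p + 1) * (fact p :: rat)"
    by (simp add: fact_Suc del: of_nat_Suc)
  have "(of_nat p + 1 :: rat) \<noteq> 0"
    by (simp add: add_nonneg_eq_0_iff)
  have "superC (Suc p) q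
      = ((of_nat p + 1) * (2 * (2 * of_nat p + 1) * A)) / ((of_nat p + 1) * ((of_nat p + of_nat q + 1) * B))"
    unfolding superC_def A_def B_def fact_double fact_sum fact_p by (simp only: mult_ac)
  also have "\<dots> = (2 * (2 * of_nat p + 1) * A) / ((of_nat p + of_nat q + 1) * B)"
    using \<open>of_nat p + 1 \<noteq> 0\<close> by (rule nonzero_mult_divide_mult_cancel_left)
  also have "\<dots> = superC p q * (2 * (2 * of_nat p + 1) / (of_nat p + of_nat q + 1))"
    unfolding superC_def A_def B_def by (simp add: mult_ac)
  finally show ?thesis .
qed

lemma superC_Suc_right:
  "superC p (Suc q) = superC p q * (2 * (2 * of_nat q + 1) / (of_nat p + of_nat q + 1))"
  using superC_Suc_left[of q p] by (simp add: superC_commute[of p] add.commute)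

lemma superC_Suc_left_plus_Suc_right: "superC (Suc p) q + superC p (Suc q) = 4 * superC p q"
proof -
  have "(of_nat p + of_nat q + 1 :: rat) \<noteq> 0"
    by (simp add: add_nonneg_eq_0_iff)
  then have "(2 * (2 * of_nat p + 1) + 2 * (2 * of_nat q + 1)) / (of_nat p + of_nat q + 1) = (4 :: rat)"
    by (simp add: divide_simps algebra_simps)
  moreover have "superC (Suc p) q + superC p (Suc q)
      = superC p q * ((2 * (2 * of_nat p + 1) + 2 * (2 * of_nat q + 1)) / (of_nat p + of_nat q + 1))"
    unfolding superC_Suc_left superC_Suc_right by (simp add: add_divide_distrib distrib_left)
  ultimately show ?thesis
    by simp
qed

theorem lemma5p5:
  fixes i j m :: nat
  shows "2 ^ (2*m) * superC i j = (\<Sum>b=0..m. of_nat (m choose b) * superC (i+b) (m+j-b))"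
  using power_mult_eq_binomial_sum_if_pascal_recurrence[of superC, OF superC_Suc_left_plus_Suc_right]
  by (simp add: power_mult atLeast0AtMost)

end
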